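(* Let $\mathbb{G}$ be an undirected, unweighted random network model which is strongly idemetric (SI) and uniformly sparse (US). Then $\mathbb{G}$ is a weak ball expander (PUMP).
   Context: A random network model $\mathbb{G}$ assigns to every $n\in\mathbb{N}$ a probability distribution over graphs with $n$ nodes; $G_n$ denotes a graph sampled from it. $d(u,v)$ is the graph distance (length of a shortest path, $\infty$ if none). For a node $u$, $B_u(r)$ is the set of nodes at distance at most $r$ from $u$, and $\overline{B_u(r)}$ its complement. For node sets $X,Y$, $e(X,Y)$ is the number of edges with one endpoint in $X$ and one in $Y$. PUMP: for every $0<\epsilon<\tfrac12$ there exists $\alpha_\epsilon>0$ such that for all sufficiently large $n$, if $u$ is chosen uniformly at random from $G_n$ then with probability $>1-\epsilon$ both (i) there exists $r$ with $|B_u(r)|\ge \epsilon n$, and (ii) for all $r$ with $\epsilon n\le |B_u(r)|\le (1-\epsilon)n$, $e(B_u(r),\overline{B_u(r)})\ge \alpha_\epsilon |B_u(r)|$. US: for each $\epsilon>0$ there is a constant $C_\epsilon$ such that for all sufficiently large $n$, with probability at least $1-\epsilon$, for any set of $y\ge\epsilon n$ edges of $G_n$ every node cover (set of nodes meeting every edge of the set) has size at least $y/C_\epsilon$. SI: there exist a finite-valued function $f$ and, for each $\epsilon>0$, a bound $b_\epsilon$ independent of $n$, such that for all sufficiently large $n$, if $u,v$ are chosen uniformly at random from $G_n$ then $|f(n)-d(u,v)|<b_\epsilon$ with probability $>1-\epsilon$. *)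

theory Defs
  imports "HOL-Probability.Probability" "HOL-Library.Extended_Nat"
begin

text \<open>A graph on n nodes: node set {..<n}, edge set a set of 2-element sets of nodes.
  A random network model assigns to each n a distribution (pmf) over such graphs.\<close>

type_synonym graph = "nat set set"

definition simple_graph_on :: "nat \<Rightarrow> graph \<Rightarrow> bool" where
  "simple_graph_on n G \<longleftrightarrow> (\<forall>e\<in>G. \<exists>x y. x \<noteq> y \<and> x < n \<and> y < n \<and> e = {x, y})"

definition random_network_model :: "(nat \<Rightarrow> graph pmf) \<Rightarrow> bool" where
  "random_network_model M \<longleftrightarrow> (\<forall>n. \<forall>G \<in> set_pmf (M n). simple_graph_on n G)"

definition walk :: "graph \<Rightarrow> nat list \<Rightarrow> bool" where
  "walk G p \<longleftrightarrow> p \<noteq> [] \<and> (\<forall>i. Suc i < length p \<longrightarrow> {p ! i, p ! Suc i} \<in> G)"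

definition gdist :: "graph \<Rightarrow> nat \<Rightarrow> nat \<Rightarrow> enat" where
  "gdist G u v = (INF p \<in> {p. walk G p \<and> hd p = u \<and> last p = v}. enat (length p - 1))"

definition ball :: "nat \<Rightarrow> graph \<Rightarrow> nat \<Rightarrow> nat \<Rightarrow> nat set" where
  "ball n G u r = {v \<in> {..<n}. gdist G u v \<le> enat r}"

definition ecount :: "graph \<Rightarrow> nat set \<Rightarrow> nat set \<Rightarrow> nat" where
  "ecount G X Y = card {e \<in> G. \<exists>x\<in>X. \<exists>y\<in>Y. e = {x, y}}"

definition node_cover :: "nat \<Rightarrow> graph \<Rightarrow> nat set \<Rightarrow> bool" where
  "node_cover n F S \<longleftrightarrow> S \<subseteq> {..<n} \<and> (\<forall>e\<in>F. e \<inter> S \<noteq> {})"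

definition PUMP :: "(nat \<Rightarrow> graph pmf) \<Rightarrow> bool" where
  "PUMP M \<longleftrightarrow> (\<forall>\<epsilon>::real. 0 < \<epsilon> \<and> \<epsilon> < 1/2 \<longrightarrow> (\<exists>\<alpha>::real. \<alpha> > 0 \<and>
     (\<forall>\<^sub>F n in sequentially.
        measure_pmf.prob (pair_pmf (M n) (pmf_of_set {..<n}))
          {(G, u). (\<exists>r. real (card (ball n G u r)) \<ge> \<epsilon> * real n) \<and>
                   (\<forall>r. \<epsilon> * real n \<le> real (card (ball n G u r)) \<and>
                        real (card (ball n G u r)) \<le> (1 - \<epsilon>) * real n \<longrightarrow>
                        real (ecount G (ball n G u r) ({..<n} - ball n G u r))
                          \<ge> \<alpha> * real (card (ball n G u r)))}
        > 1 - \<epsilon>)))"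

definition uniformly_sparse :: "(nat \<Rightarrow> graph pmf) \<Rightarrow> bool" where
  "uniformly_sparse M \<longleftrightarrow> (\<forall>\<epsilon>::real. \<epsilon> > 0 \<longrightarrow> (\<exists>C::real. C > 0 \<and>
     (\<forall>\<^sub>F n in sequentially.
        measure_pmf.prob (M n)
          {G. \<forall>F S. F \<subseteq> G \<and> real (card F) \<ge> \<epsilon> * real n \<and> node_cover n F S \<longrightarrow>
                    real (card S) \<ge> real (card F) / C}
        \<ge> 1 - \<epsilon>)))"

definition strongly_idemetric :: "(nat \<Rightarrow> graph pmf) \<Rightarrow> bool" where
  "strongly_idemetric M \<longleftrightarrow> (\<exists>f :: nat \<Rightarrow> real. \<forall>\<epsilon>::real. \<epsilon> > 0 \<longrightarrow> (\<exists>b::real.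
     (\<forall>\<^sub>F n in sequentially.
        measure_pmf.prob (pair_pmf (M n) (pair_pmf (pmf_of_set {..<n}) (pmf_of_set {..<n})))
          {(G, u, v). \<exists>k. gdist G u v = enat k \<and> \<bar>f n - real k\<bar> < b}
        > 1 - \<epsilon>)))"

end

theory Submission
  imports Defs
begin

text \<open>
  By strong idemetricity and Markov's inequality, for most pairs (G, u) all but an
  \<open>\<epsilon>/2\<close>-fraction of the nodes are typical: their distance from u differs from f n by less than a
  constant b. A ball around u with between \<open>\<epsilon> n\<close> and \<open>(1 - \<epsilon>) n\<close> nodes then contains a
  typical node, so the more than \<open>\<epsilon> n / 2\<close> typical nodes outside it lie in the next
  \<open>L \<approx> 2 b\<close> distance layers, one of which has at least \<open>\<epsilon> n / (2 L)\<close> nodes.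
  Every node of layer j + 1 has a parent in layer j; the parent edges are as many as the nodes of
  layer j + 1 and are covered by layer j, so uniform sparsity makes layer j a constant fraction of
  layer j + 1. Going back at most L layers shows that the first layer outside the ball has at least
  \<open>\<alpha> n\<close> nodes, and their parent edges all leave the ball. A union bound over the L sparsity
  thresholds and the typicality event gives the probability bound.
\<close>

section \<open>Walks and graph distance\<close>

lemma walk_snoc_iff:
  assumes "p \<noteq> []"
  shows "walk G (p @ [v]) \<longleftrightarrow> walk G p \<and> {last p, v} \<in> G"
proof -
  have edge: "{(p @ [v]) ! i, (p @ [v]) ! Suc i} =
      (if Suc i < length p then {p ! i, p ! Suc i} else {last p, v})" if "Suc i < Suc (length p)" for i
  proof (cases "Suc i < length p")
    case False
    with that have "i = length p - 1" by simp
    with assms show ?thesis by (simp add: nth_append last_conv_nth)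
  qed (simp add: nth_append)
  have "(\<forall>i. Suc i < Suc (length p) \<longrightarrow> {(p @ [v]) ! i, (p @ [v]) ! Suc i} \<in> G) \<longleftrightarrow>
        (\<forall>i. Suc i < length p \<longrightarrow> {p ! i, p ! Suc i} \<in> G) \<and> {last p, v} \<in> G"
  proof safe
    assume "\<forall>i. Suc i < Suc (length p) \<longrightarrow> {(p @ [v]) ! i, (p @ [v]) ! Suc i} \<in> G"
    then show "{last p, v} \<in> G"
      using edge[of "length p - 1"] assms by (cases p) auto
  qed (auto simp: edge, metis Suc_lessD)
  then show ?thesis using assms by (simp add: walk_def)
qed

lemma gdist_le_walk:
  assumes "walk G p" "hd p = u" "last p = v"
  shows "gdist G u v \<le> enat (length p - 1)"
  unfolding gdist_def using assms by (intro INF_lower2[of p]) auto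

lemma gdist_attained:
  assumes "gdist G u v = enat k"
  obtains p where "walk G p" "hd p = u" "last p = v" "length p = Suc k"
proof -
  let ?W = "{p. walk G p \<and> hd p = u \<and> last p = v}"
  have "?W \<noteq> {}"
  proof
    assume "?W = {}"
    with assms show False
      unfolding gdist_def by (simp only: image_empty Inf_empty) (simp add: top_enat_def)
  qed
  then obtain p0 where "p0 \<in> ?W" by blast
  then have "gdist G u v \<in> (\<lambda>p. enat (length p - 1)) ` ?W"
    unfolding gdist_def by (rule wellorder_InfI[OF imageI])
  then obtain p where "p \<in> ?W" "length p - 1 = k"
    using assms by auto
  moreover have "p \<noteq> []" using \<open>p \<in> ?W\<close> by (simp add: walk_def)
  ultimately show ?thesis using that by auto
qed

lemma gdist_edge_le:
  assumes "{w, v} \<in> G"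
  shows "gdist G u v \<le> gdist G u w + 1"
proof (cases "gdist G u w")
  case (enat k)
  then obtain p where p: "walk G p" "hd p = u" "last p = w" "length p = Suc k"
    by (rule gdist_attained)
  then have "p \<noteq> []" by auto
  then have "walk G (p @ [v])" using p assms by (simp add: walk_snoc_iff)
  then have "gdist G u v \<le> enat (length (p @ [v]) - 1)"
    using \<open>p \<noteq> []\<close> p by (intro gdist_le_walk) auto
  then show ?thesis using p enat by (simp add: one_enat_def)
qed simp

lemma gdist_Suc_imp_neighbour:
  assumes "gdist G u v = enat (Suc j)"
  obtains w where "gdist G u w = enat j" "{w, v} \<in> G"
proof -
  obtain p where p: "walk G p" "hd p = u" "last p = v" "length p = Suc (Suc j)"
    using assms by (rule gdist_attained)
  define q where "q = butlast p"
  have "length q = Suc j" using p(4) by (simp add: q_def)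
  moreover from this have "q \<noteq> []" by auto
  moreover have "p = q @ [v]" using p(3,4) by (cases p rule: rev_cases) (auto simp: q_def)
  ultimately have q: "walk G q" "{last q, v} \<in> G" "hd q = u" "length q = Suc j"
    using p by (auto simp: walk_snoc_iff)
  have "gdist G u (last q) \<le> enat j"
    using gdist_le_walk[OF q(1,3)] q(4) by simp
  moreover have "enat (Suc j) \<le> gdist G u (last q) + 1"
    using gdist_edge_le[OF q(2), of u] assms by simp
  ultimately have "gdist G u (last q) = enat j"
    by (cases "gdist G u (last q)") (auto simp: one_enat_def)
  then show ?thesis using q(2) by (rule that)
qed

lemma simple_graph_on_node_lt:
  assumes "simple_graph_on n G" "e \<in> G" "x \<in> e"
  shows "x < n"
proof -
  obtain a c where "a < n" "c < n" "e = {a, c}"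
    using assms(1,2) unfolding simple_graph_on_def by blast
  then show ?thesis using assms(3) by auto
qed

lemma simple_graph_on_finite:
  assumes "simple_graph_on n G"
  shows "finite G"
proof (rule finite_subset)
  show "G \<subseteq> Pow {..<n}"
    using simple_graph_on_node_lt[OF assms] by blast
qed simp

section \<open>Distance layers and sparsity\<close>

definition layer :: "nat \<Rightarrow> graph \<Rightarrow> nat \<Rightarrow> nat \<Rightarrow> nat set" where
  "layer n G u j = {v \<in> {..<n}. gdist G u v = enat j}"

lemma layer_Suc_parent_edges:
  assumes "simple_graph_on n G"
  obtains F where "F \<subseteq> G" "card F = card (layer n G u (Suc j))"
    "node_cover n F (layer n G u j)"
    "\<forall>e\<in>F. \<exists>x\<in>ball n G u j. \<exists>y\<in>{..<n} - ball n G u j. e = {x, y}"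
proof -
  have "\<forall>v\<in>layer n G u (Suc j). \<exists>w. gdist G u w = enat j \<and> {w, v} \<in> G"
    unfolding layer_def by (blast elim: gdist_Suc_imp_neighbour)
  then obtain parent where parent:
    "\<And>v. v \<in> layer n G u (Suc j) \<Longrightarrow> gdist G u (parent v) = enat j \<and> {parent v, v} \<in> G"
    by metis
  have parent_layer: "parent v \<in> layer n G u j" if "v \<in> layer n G u (Suc j)" for v
    using parent[OF that] simple_graph_on_node_lt[OF assms] unfolding layer_def by blast
  define F where "F = (\<lambda>v. {parent v, v}) ` layer n G u (Suc j)"
  have "inj_on (\<lambda>v. {parent v, v}) (layer n G u (Suc j))"
  proof (rule inj_onI)
    fix v v' assume v: "v \<in> layer n G u (Suc j)" and v': "v' \<in> layer n G u (Suc j)"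
      and "{parent v, v} = {parent v', v'}"
    moreover have "v \<noteq> parent v'"
      using v parent_layer[OF v'] by (auto simp: layer_def)
    ultimately show "v = v'" by (auto simp: doubleton_eq_iff)
  qed
  then have "card F = card (layer n G u (Suc j))"
    unfolding F_def by (rule card_image)
  moreover have "F \<subseteq> G" "node_cover n F (layer n G u j)"
    using parent parent_layer by (auto simp: F_def node_cover_def layer_def)
  moreover have "\<forall>e\<in>F. \<exists>x\<in>ball n G u j. \<exists>y\<in>{..<n} - ball n G u j. e = {x, y}"
    using parent_layer by (fastforce simp: F_def layer_def ball_def)
  ultimately show ?thesis using that by blast
qed

lemma card_layer_Suc_le_ecount:
  assumes "simple_graph_on n G"
  shows "card (layer n G u (Suc j)) \<le> ecount G (ball n G u j) ({..<n} - ball n G u j)"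
proof -
  let ?E = "{e \<in> G. \<exists>x\<in>ball n G u j. \<exists>y\<in>{..<n} - ball n G u j. e = {x, y}}"
  obtain F where "F \<subseteq> G" "card F = card (layer n G u (Suc j))"
    and "\<forall>e\<in>F. \<exists>x\<in>ball n G u j. \<exists>y\<in>{..<n} - ball n G u j. e = {x, y}"
    by (rule layer_Suc_parent_edges[OF assms])
  then have "F \<subseteq> ?E" by blast
  moreover have "finite ?E"
    using simple_graph_on_finite[OF assms] by simp
  ultimately have "card F \<le> card ?E"
    by (intro card_mono)
  then show ?thesis
    unfolding ecount_def using \<open>card F = card (layer n G u (Suc j))\<close> by simp
qed

definition sparse_graph :: "nat \<Rightarrow> real \<Rightarrow> real \<Rightarrow> graph \<Rightarrow> bool" where
  "sparse_graph n t C G \<longleftrightarrow> (\<forall>F S. F \<subseteq> G \<and> real (card F) \<ge> t * real n \<and> node_cover n F S \<longrightarrow>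
                                  real (card S) \<ge> real (card F) / C)"

lemma sparse_graph_card_layer:
  assumes "simple_graph_on n G" "sparse_graph n t C G"
    and "t * real n \<le> real (card (layer n G u (Suc j)))"
  shows "real (card (layer n G u (Suc j))) / C \<le> real (card (layer n G u j))"
proof -
  obtain F where "F \<subseteq> G" "card F = card (layer n G u (Suc j))" "node_cover n F (layer n G u j)"
    by (rule layer_Suc_parent_edges[OF assms(1)])
  then show ?thesis using assms(2,3) unfolding sparse_graph_def by metis
qed

lemma sparse_graph_layer_chain:
  assumes "simple_graph_on n G"
    and "e 0 * real n \<le> real (card (layer n G u (j + m)))"
    and "\<And>i. i < m \<Longrightarrow> sparse_graph n (e i) (C i) G \<and> 0 < C i \<and> e (Suc i) = e i / C i"
  shows "e m * real n \<le> real (card (layer n G u j))"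
  using assms(2,3)
proof (induction m arbitrary: j)
  case (Suc m)
  have "e m * real n \<le> real (card (layer n G u (Suc j)))"
    using Suc.prems by (intro Suc.IH) simp_all
  moreover have "sparse_graph n (e m) (C m) G" "0 < C m" "e (Suc m) = e m / C m"
    using Suc.prems(2)[of m] by simp_all
  ultimately have "e (Suc m) * real n \<le> real (card (layer n G u (Suc j))) / C m"
    by (simp add: divide_right_mono)
  also have "\<dots> \<le> real (card (layer n G u j))"
    by (rule sparse_graph_card_layer[OF assms(1)]) fact+
  finally show ?case .
qed simp

lemma sparse_graph_mono_constant:
  assumes "sparse_graph n t C G" "0 < C" "C \<le> C'"
  shows "sparse_graph n t C' G"
  unfolding sparse_graph_def
proof (intro allI impI)
  fix F S assume "F \<subseteq> G \<and> t * real n \<le> real (card F) \<and> node_cover n F S"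
  then have "real (card F) / C \<le> real (card S)"
    using assms(1) unfolding sparse_graph_def by blast
  moreover have "real (card F) / C' \<le> real (card F) / C"
    using assms(2,3) by (intro divide_left_mono) auto
  ultimately show "real (card F) / C' \<le> real (card S)" by linarith
qed

section \<open>Nodes at typical distance\<close>

lemma card_UN_le_card_mul_max:
  assumes "finite I" "I \<noteq> {}"
  obtains i where "i \<in> I" "card (\<Union>i\<in>I. A i) \<le> card I * card (A i)"
proof -
  have "Max ((\<lambda>j. card (A j)) ` I) \<in> (\<lambda>j. card (A j)) ` I"
    using assms by (intro Max_in) auto
  then obtain i where i: "i \<in> I" "card (A i) = Max ((\<lambda>j. card (A j)) ` I)"
    by auto
  then have "\<forall>j\<in>I. card (A j) \<le> card (A i)"
    using assms(1) by simp
  have "card (\<Union>i\<in>I. A i) \<le> (\<Sum>j\<in>I. card (A j))"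
    using assms(1) by (rule card_UN_le)
  also have "\<dots> \<le> card I * card (A i)"
    using \<open>\<forall>j\<in>I. card (A j) \<le> card (A i)\<close> sum_bounded_above[of I "\<lambda>j. card (A j)" "card (A i)"]
    by simp
  finally show ?thesis using i(1) that by blast
qed

text \<open>The parameter c plays the role of the typical distance f n of strong idemetricity.\<close>

definition typical_nodes :: "nat \<Rightarrow> graph \<Rightarrow> nat \<Rightarrow> real \<Rightarrow> real \<Rightarrow> nat set" where
  "typical_nodes n G u c b = {v \<in> {..<n}. \<exists>k. gdist G u v = enat k \<and> \<bar>c - real k\<bar> < b}"

lemma typical_nodes_subset_ball:
  "typical_nodes n G u c b \<subseteq> ball n G u (nat \<lceil>c + b\<rceil>)"
proof
  fix v assume "v \<in> typical_nodes n G u c b"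
  then obtain k where k: "v < n" "gdist G u v = enat k" "\<bar>c - real k\<bar> < b"
    unfolding typical_nodes_def by blast
  then have "k \<le> nat \<lceil>c + b\<rceil>" by linarith
  then show "v \<in> ball n G u (nat \<lceil>c + b\<rceil>)" using k unfolding ball_def by simp
qed

lemma typical_nodes_beyond_ball:
  assumes "v0 \<in> typical_nodes n G u c b \<inter> ball n G u r" "2 * b \<le> real L"
  shows "typical_nodes n G u c b - ball n G u r \<subseteq> (\<Union>j<L. layer n G u (Suc r + j))"
proof
  obtain k0 where k0: "gdist G u v0 = enat k0" "\<bar>c - real k0\<bar> < b" "k0 \<le> r"
    using assms(1) unfolding typical_nodes_def ball_def by auto
  fix v assume "v \<in> typical_nodes n G u c b - ball n G u r"
  then obtain k where k: "v < n" "gdist G u v = enat k" "\<bar>c - real k\<bar> < b" "r < k"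
    unfolding typical_nodes_def ball_def by auto
  have "real k < real (r + L)"
    using k(3) k0(2) of_nat_mono[OF k0(3)] assms(2) by (auto simp: abs_less_iff)
  then have "k < r + L" by (simp only: of_nat_less_iff)
  then have "k - Suc r < L" using k(4) by auto
  moreover have "v \<in> layer n G u (Suc r + (k - Suc r))" using k unfolding layer_def by simp
  ultimately show "v \<in> (\<Union>j<L. layer n G u (Suc r + j))" by blast
qed

lemma card_Int_Diff_large:
  assumes "T \<subseteq> {..<n}" "B \<subseteq> {..<n}" "(1 - \<epsilon>/2) * real n < real (card T)"
    and "\<epsilon> * real n \<le> real (card B)" "real (card B) \<le> (1 - \<epsilon>) * real n"
  shows "\<epsilon> / 2 * real n < real (card (T \<inter> B))" "\<epsilon> / 2 * real n < real (card (T - B))"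
proof -
  have fin: "finite T" "finite B"
    using assms(1,2) finite_subset by blast+
  have "card (T \<union> B) \<le> n"
    using card_mono[of "{..<n}" "T \<union> B"] assms(1,2) by simp
  then have "real (card T) + real (card B) \<le> real n + real (card (T \<inter> B))"
    using card_Un_Int[OF fin] by linarith
  then show "\<epsilon> / 2 * real n < real (card (T \<inter> B))"
    using assms(3,4) by (simp add: algebra_simps)
  have "card T \<le> card (T - B) + card B"
    using diff_card_le_card_Diff[OF fin(2), of T] by linarith
  then show "\<epsilon> / 2 * real n < real (card (T - B))"
    using assms(3,5) by (simp add: algebra_simps)
qed

lemma layer_beyond_ball_large:
  assumes "real (card (typical_nodes n G u c b)) > (1 - \<epsilon>/2) * real n" "0 < \<epsilon>"
    and "\<epsilon> * real n \<le> real (card (ball n G u r))" "real (card (ball n G u r)) \<le> (1 - \<epsilon>) * real n"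
    and "2 * b \<le> real L" "2 * real L * \<beta> \<le> \<epsilon>"
  obtains j where "j < L" "\<beta> * real n \<le> real (card (layer n G u (Suc r + j)))"
proof -
  define T where "T = typical_nodes n G u c b"
  define B where "B = ball n G u r"
  have "T \<subseteq> {..<n}" "B \<subseteq> {..<n}"
    by (auto simp: T_def B_def typical_nodes_def ball_def)
  from card_Int_Diff_large[OF this] assms(1,3,4)
  have "\<epsilon> / 2 * real n < real (card (T \<inter> B))"
    and Diff_large: "\<epsilon> / 2 * real n < real (card (T - B))"
    unfolding T_def B_def by auto
  moreover have "0 \<le> \<epsilon> / 2 * real n" using assms(2) by simp
  ultimately have "0 < card (T \<inter> B)" "0 < card (T - B)"
    by linarith+
  then have "T \<inter> B \<noteq> {}" "T - B \<noteq> {}"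
    by (simp_all add: card_gt_0_iff)
  then obtain v0 where "v0 \<in> T \<inter> B" by blast
  then have beyond: "T - B \<subseteq> (\<Union>j<L. layer n G u (Suc r + j))"
    unfolding T_def B_def using assms(5) by (rule typical_nodes_beyond_ball)
  then have "{..<L} \<noteq> {}" using \<open>T - B \<noteq> {}\<close> by blast
  then obtain j where j: "j < L"
    and "card (\<Union>j<L. layer n G u (Suc r + j)) \<le> L * card (layer n G u (Suc r + j))"
    by (rule card_UN_le_card_mul_max[OF finite_lessThan, where A = "\<lambda>j. layer n G u (Suc r + j)"]) auto
  moreover have "card (T - B) \<le> card (\<Union>j<L. layer n G u (Suc r + j))"
    using beyond by (rule card_mono[rotated]) (simp add: layer_def)
  ultimately have "real (card (T - B)) \<le> real L * real (card (layer n G u (Suc r + j)))"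
    by (metis le_trans of_nat_mono of_nat_mult)
  moreover have "real L * (\<beta> * real n) \<le> \<epsilon> / 2 * real n"
    using mult_right_mono[OF assms(6), of "real n"] by simp
  ultimately have "real L * (\<beta> * real n) < real L * real (card (layer n G u (Suc r + j)))"
    using Diff_large by linarith
  then have "\<beta> * real n < real (card (layer n G u (Suc r + j)))"
    by (rule mult_left_less_imp_less) simp
  then show ?thesis using that[OF j] by simp
qed

definition ball_expanding :: "nat \<Rightarrow> real \<Rightarrow> real \<Rightarrow> graph \<Rightarrow> nat \<Rightarrow> bool" where
  "ball_expanding n \<epsilon> \<alpha> G u \<longleftrightarrow>
     (\<exists>r. real (card (ball n G u r)) \<ge> \<epsilon> * real n) \<and>
     (\<forall>r. \<epsilon> * real n \<le> real (card (ball n G u r)) \<and>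
          real (card (ball n G u r)) \<le> (1 - \<epsilon>) * real n \<longrightarrow>
          real (ecount G (ball n G u r) ({..<n} - ball n G u r)) \<ge> \<alpha> * real (card (ball n G u r)))"

lemma ball_expanding_if_typical_sparse:
  assumes simple: "simple_graph_on n G"
    and typical: "real (card (typical_nodes n G u c b)) > (1 - \<epsilon>/2) * real n"
    and "0 < \<epsilon>" "3 * \<epsilon> \<le> 2" "2 * b \<le> real L"
    and sparse: "\<And>i. i < L \<Longrightarrow> sparse_graph n (e i) (C i) G"
    and chain: "\<And>i. 1 \<le> C i \<and> e (Suc i) = e i / C i" and e_pos: "\<And>i. 0 < e i"
    and budget: "2 * real L * e 0 \<le> \<epsilon>"
  shows "ball_expanding n \<epsilon> (e L) G u"
proof -
  have "\<epsilon> * real n \<le> (1 - \<epsilon>/2) * real n"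
    using \<open>3 * \<epsilon> \<le> 2\<close> by (intro mult_right_mono) auto
  also have "\<dots> \<le> real (card (typical_nodes n G u c b))"
    using typical by simp
  also have "\<dots> \<le> real (card (ball n G u (nat \<lceil>c + b\<rceil>)))"
    by (intro of_nat_mono card_mono typical_nodes_subset_ball) (simp add: ball_def)
  finally have "\<exists>r. \<epsilon> * real n \<le> real (card (ball n G u r))" ..
  moreover have "e L * real (card (ball n G u r)) \<le> real (ecount G (ball n G u r) ({..<n} - ball n G u r))"
    if lower: "\<epsilon> * real n \<le> real (card (ball n G u r))"
      and upper: "real (card (ball n G u r)) \<le> (1 - \<epsilon>) * real n" for r
  proof -
    obtain j where "j < L" and far_layer: "e 0 * real n \<le> real (card (layer n G u (Suc r + j)))"
      by (rule layer_beyond_ball_large[OF typical \<open>0 < \<epsilon>\<close> lower upper assms(5) budget])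
    have "e (Suc i) \<le> e i" for i
      using chain[of i] e_pos[of i] divide_left_mono[of 1 "C i" "e i"] by simp
    then have "e L \<le> e j"
      by (rule lift_Suc_antimono_le) (use \<open>j < L\<close> in simp)
    moreover have "card (ball n G u r) \<le> n"
      using card_mono[of "{..<n}" "ball n G u r"] by (auto simp: ball_def)
    ultimately have "e L * real (card (ball n G u r)) \<le> e j * real n"
      using e_pos[of L] by (intro mult_mono) auto
    also have "\<dots> \<le> real (card (layer n G u (Suc r)))"
    proof (rule sparse_graph_layer_chain[where e = e, OF simple far_layer])
      fix i assume "i < j"
      then show "sparse_graph n (e i) (C i) G \<and> 0 < C i \<and> e (Suc i) = e i / C i"
        using sparse[of i] chain[of i] \<open>j < L\<close> by auto
    qed
    also have "\<dots> \<le> real (ecount G (ball n G u r) ({..<n} - ball n G u r))"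
      using card_layer_Suc_le_ecount[OF simple] by simp
    finally show ?thesis .
  qed
  ultimately show ?thesis unfolding ball_expanding_def by blast
qed

section \<open>Events of product distributions\<close>

lemma measure_pair_pmf:
  "measure_pmf.prob (pair_pmf p q) S =
     measure_pmf.expectation p (\<lambda>x. measure_pmf.prob q {y. (x, y) \<in> S})"
proof -
  have slice: "(\<integral>\<^sup>+y. indicator S (x, y) \<partial>q) = emeasure q {y. (x, y) \<in> S}" for x
  proof -
    have "(\<integral>\<^sup>+y. indicator S (x, y) \<partial>q) = (\<integral>\<^sup>+y. indicator {y. (x, y) \<in> S} y \<partial>q)"
      by (intro nn_integral_cong) (simp split: split_indicator)
    then show ?thesis by simp
  qed
  have "ennreal (measure_pmf.prob (pair_pmf p q) S) = emeasure (pair_pmf p q) S"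
    by (simp add: measure_pmf.emeasure_eq_measure)
  also have "\<dots> = (\<integral>\<^sup>+x. \<integral>\<^sup>+y. indicator S (x, y) \<partial>q \<partial>p)"
    by (simp flip: nn_integral_indicator add: nn_integral_pair_pmf')
  also have "\<dots> = (\<integral>\<^sup>+x. ennreal (measure_pmf.prob q {y. (x, y) \<in> S}) \<partial>p)"
    by (simp add: slice measure_pmf.emeasure_eq_measure)
  also have "\<dots> = ennreal (measure_pmf.expectation p (\<lambda>x. measure_pmf.prob q {y. (x, y) \<in> S}))"
    by (intro nn_integral_eq_integral measure_pmf.integrable_const_bound[where B=1]) auto
  finally show ?thesis by (simp add: integral_nonneg_AE)
qed

lemma measure_pmf_sections_large:
  assumes "measure_pmf.prob (pair_pmf p q) S > 1 - \<delta> * \<eta>" "\<delta> > 0"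
  shows "measure_pmf.prob p {x. measure_pmf.prob q {y. (x, y) \<in> S} > 1 - \<delta>} > 1 - \<eta>"
proof -
  define \<phi> where "\<phi> x = 1 - measure_pmf.prob q {y. (x, y) \<in> S}" for x
  have int: "integrable p \<phi>"
    unfolding \<phi>_def by (intro measure_pmf.integrable_const_bound[where B=1]) auto
  have "measure_pmf.expectation p \<phi> = 1 - measure_pmf.prob (pair_pmf p q) S"
    unfolding \<phi>_def measure_pair_pmf
    by (subst Bochner_Integration.integral_diff) (auto intro: measure_pmf.integrable_const_bound[where B=1])
  moreover have "measure_pmf.prob p {x. \<phi> x \<ge> \<delta>} * \<delta> \<le> measure_pmf.expectation p \<phi>"
  proof -
    have "AE x in p. 0 \<le> \<phi> x" by (simp add: \<phi>_def)
    from integral_Markov_inequality_measure[OF int _ this assms(2)]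
    show ?thesis using assms(2) by (simp add: pos_le_divide_eq)
  qed
  ultimately have "measure_pmf.prob p {x. \<phi> x \<ge> \<delta>} * \<delta> < \<eta> * \<delta>"
    using assms(1) by (simp add: mult.commute)
  then have "measure_pmf.prob p {x. \<phi> x \<ge> \<delta>} < \<eta>"
    using assms(2) by simp
  moreover have "{x. \<phi> x \<ge> \<delta>} = UNIV - {x. measure_pmf.prob q {y. (x, y) \<in> S} > 1 - \<delta>}"
    by (auto simp: \<phi>_def)
  ultimately show ?thesis
    using measure_pmf.prob_compl[of "{x. measure_pmf.prob q {y. (x, y) \<in> S} > 1 - \<delta>}" p] by simp
qed

lemma measure_pair_pmf_fst:
  "measure_pmf.prob (pair_pmf p q) {z. fst z \<in> X} = measure_pmf.prob p X"
  using measure_map_pmf[of fst "pair_pmf p q" X] by (simp add: map_fst_pair_pmf vimage_def)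

lemma measure_pmf_Int_ge:
  "measure_pmf.prob p A + measure_pmf.prob p B - 1 \<le> measure_pmf.prob p (A \<inter> B)"
  using measure_pmf.finite_measure_Union'[of A p B] measure_pmf.finite_measure_Diff'[of B p A]
    measure_pmf.prob_le_1[of p "A \<union> B"] by (simp add: Int_commute)

lemma measure_pmf_INT_ge:
  assumes "finite I" "\<And>i. i \<in> I \<Longrightarrow> measure_pmf.prob p (A i) \<ge> 1 - t i"
  shows "measure_pmf.prob p (\<Inter>i\<in>I. A i) \<ge> 1 - (\<Sum>i\<in>I. t i)"
  using assms
proof (induction I rule: finite_induct)
  case (insert i I)
  have "1 - (\<Sum>j\<in>I. t j) \<le> measure_pmf.prob p (\<Inter>j\<in>I. A j)"
    using insert.IH insert.prems by blast
  then have "1 - (\<Sum>j\<in>insert i I. t j) \<le> measure_pmf.prob p (A i) + measure_pmf.prob p (\<Inter>j\<in>I. A j) - 1"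
    using insert.hyps insert.prems[of i] by simp
  also have "\<dots> \<le> measure_pmf.prob p (\<Inter>j\<in>insert i I. A j)"
    using measure_pmf_Int_ge[of p "A i" "\<Inter>j\<in>I. A j"] by simp
  finally show ?case .
qed simp

section \<open>Random networks\<close>

lemma typical_nodes_likely:
  fixes A :: "graph pmf"
  assumes "0 < n" "0 < \<delta>"
    and "measure_pmf.prob (pair_pmf A (pair_pmf (pmf_of_set {..<n}) (pmf_of_set {..<n})))
           {(G, u, v). \<exists>k. gdist G u v = enat k \<and> \<bar>c - real k\<bar> < b} > 1 - \<delta> * \<eta>"
  shows "measure_pmf.prob (pair_pmf A (pmf_of_set {..<n}))
           {(G, u). real (card (typical_nodes n G u c b)) > (1 - \<delta>) * real n} > 1 - \<eta>"
proof -
  define U where "U = pmf_of_set {..<n}"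
  define S where "S = {((G, u), v). \<exists>k. gdist G u v = enat k \<and> \<bar>c - real k\<bar> < b}"
  have "(\<lambda>(x, y, z). ((x, y), z)) -` S = {(G, u, v). \<exists>k. gdist G u v = enat k \<and> \<bar>c - real k\<bar> < b}"
    by (auto simp: S_def)
  then have "measure_pmf.prob (pair_pmf (pair_pmf A U) U) S =
      measure_pmf.prob (pair_pmf A (pair_pmf U U)) {(G, u, v). \<exists>k. gdist G u v = enat k \<and> \<bar>c - real k\<bar> < b}"
    by (simp add: pair_pair_pmf)
  then have "measure_pmf.prob (pair_pmf A U) {x. measure_pmf.prob U {v. (x, v) \<in> S} > 1 - \<delta>} > 1 - \<eta>"
    using assms(2,3) unfolding U_def by (intro measure_pmf_sections_large) auto
  moreover have "measure_pmf.prob U {v. (x, v) \<in> S} =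
      real (card (typical_nodes n (fst x) (snd x) c b)) / real n" for x
    using assms(1) unfolding U_def S_def typical_nodes_def
    by (subst measure_pmf_of_set) (auto intro!: arg_cong[where f = card])
  ultimately show ?thesis
    using assms(1) by (simp add: U_def pos_less_divide_eq case_prod_unfold)
qed

lemma uniformly_sparse_iff:
  "uniformly_sparse M \<longleftrightarrow> (\<forall>t>0. \<exists>C>0. \<forall>\<^sub>F n in sequentially.
     measure_pmf.prob (M n) {G. sparse_graph n t C G} \<ge> 1 - t)"
  by (simp add: uniformly_sparse_def sparse_graph_def)

lemma uniformly_sparse_choice:
  assumes "uniformly_sparse M"
  obtains C where "\<And>t. 0 < t \<Longrightarrow> 1 \<le> C t \<and>
    (\<forall>\<^sub>F n in sequentially. measure_pmf.prob (M n) {G. sparse_graph n t (C t) G} \<ge> 1 - t)"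
proof -
  have "\<exists>C'. 1 \<le> C' \<and>
      (\<forall>\<^sub>F n in sequentially. measure_pmf.prob (M n) {G. sparse_graph n t C' G} \<ge> 1 - t)"
    if t_pos: "0 < t" for t
  proof -
    obtain C where "0 < C"
      and ev: "\<forall>\<^sub>F n in sequentially. measure_pmf.prob (M n) {G. sparse_graph n t C G} \<ge> 1 - t"
      using assms[unfolded uniformly_sparse_iff, rule_format, OF t_pos] by blast
    have "\<forall>\<^sub>F n in sequentially. measure_pmf.prob (M n) {G. sparse_graph n t (max 1 C) G} \<ge> 1 - t"
      using ev
    proof eventually_elim
      case (elim n)
      have "measure_pmf.prob (M n) {G. sparse_graph n t C G}
          \<le> measure_pmf.prob (M n) {G. sparse_graph n t (max 1 C) G}"
        using sparse_graph_mono_constant[OF _ \<open>0 < C\<close>, of n t _ "max 1 C"]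
        by (intro measure_pmf.finite_measure_mono) auto
      with elim show ?case by linarith
    qed
    then show ?thesis by (intro exI[of _ "max 1 C"]) simp
  qed
  then have "\<forall>t. \<exists>C'. 0 < t \<longrightarrow> 1 \<le> C' \<and>
      (\<forall>\<^sub>F n in sequentially. measure_pmf.prob (M n) {G. sparse_graph n t C' G} \<ge> 1 - t)"
    by blast
  from choice[OF this] obtain C where "\<forall>t. 0 < t \<longrightarrow> 1 \<le> C t \<and>
      (\<forall>\<^sub>F n in sequentially. measure_pmf.prob (M n) {G. sparse_graph n t (C t) G} \<ge> 1 - t)" ..
  then show ?thesis by (intro that) blast
qed

lemma uniformly_sparse_threshold_chain:
  assumes "uniformly_sparse M" "0 < \<beta>" "0 < L"
  obtains e C where "e 0 = \<beta> / real L" "\<And>i. 0 < e i" "\<And>i. 1 \<le> C i \<and> e (Suc i) = e i / C i"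
    "\<forall>\<^sub>F n in sequentially.
       measure_pmf.prob (M n) {G. \<forall>i<L. sparse_graph n (e i) (C i) G} \<ge> 1 - \<beta>"
proof -
  obtain C where C: "\<And>t. 0 < t \<Longrightarrow> 1 \<le> C t \<and>
      (\<forall>\<^sub>F n in sequentially. measure_pmf.prob (M n) {G. sparse_graph n t (C t) G} \<ge> 1 - t)"
    using uniformly_sparse_choice[OF assms(1)] by blast
  txt \<open>Each threshold is the previous one divided by the sparsity constant valid at it, so that
    a layer with \<open>e i * n\<close> nodes forces the layer before it to have \<open>e (Suc i) * n\<close> nodes.\<close>
  define e where "e i = ((\<lambda>t. t / C t) ^^ i) (\<beta> / real L)" for i
  have e_Suc: "e (Suc i) = e i / C (e i)" for i
    by (simp add: e_def)
  have e_pos: "0 < e i" for i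
  proof (induction i)
    case (Suc i)
    then show ?case using C[OF Suc] by (simp add: e_Suc)
  qed (use assms(2,3) in \<open>simp add: e_def\<close>)
  have e_le: "e i \<le> \<beta> / real L" for i
  proof (induction i)
    case (Suc i)
    have "e i / C (e i) \<le> e i / 1"
      using C[OF e_pos[of i]] e_pos[of i] by (intro divide_left_mono) auto
    with Suc show ?case by (simp add: e_Suc)
  qed (simp add: e_def)
  have "\<forall>\<^sub>F n in sequentially. \<forall>i\<in>{..<L}.
      measure_pmf.prob (M n) {G. sparse_graph n (e i) (C (e i)) G} \<ge> 1 - e i"
    using C[OF e_pos] by (intro eventually_ball_finite) auto
  then have "\<forall>\<^sub>F n in sequentially.
      measure_pmf.prob (M n) {G. \<forall>i<L. sparse_graph n (e i) (C (e i)) G} \<ge> 1 - \<beta>"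
  proof eventually_elim
    case (elim n)
    have "1 - \<beta> \<le> 1 - (\<Sum>i<L. e i)"
      using sum_bounded_above[of "{..<L}" e "\<beta> / real L"] e_le assms(3) by simp
    also have "\<dots> \<le> measure_pmf.prob (M n) (\<Inter>i<L. {G. sparse_graph n (e i) (C (e i)) G})"
      using elim by (intro measure_pmf_INT_ge) auto
    also have "(\<Inter>i<L. {G. sparse_graph n (e i) (C (e i)) G}) =
        {G. \<forall>i<L. sparse_graph n (e i) (C (e i)) G}"
      by auto
    finally show ?case .
  qed
  then show ?thesis
    using that[of e "\<lambda>i. C (e i)"] C[OF e_pos] e_pos by (simp add: e_Suc e_def)
qed

lemma ball_expanding_likely:
  fixes A :: "graph pmf"
  assumes simple: "\<forall>G\<in>set_pmf A. simple_graph_on n G" and "0 < n"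
    and "0 < \<epsilon>" "3 * \<epsilon> \<le> 2" "2 * b \<le> real L"
    and typical: "measure_pmf.prob (pair_pmf A (pair_pmf (pmf_of_set {..<n}) (pmf_of_set {..<n})))
           {(G, u, v). \<exists>k. gdist G u v = enat k \<and> \<bar>c - real k\<bar> < b} > 1 - \<epsilon>/2 * \<eta>"
    and sparse: "measure_pmf.prob A {G. \<forall>i<L. sparse_graph n (e i) (C i) G} \<ge> 1 - \<theta>"
    and chain: "\<And>i. 1 \<le> C i \<and> e (Suc i) = e i / C i" and e_pos: "\<And>i. 0 < e i"
    and budget: "2 * real L * e 0 \<le> \<epsilon>"
  shows "measure_pmf.prob (pair_pmf A (pmf_of_set {..<n}))
           {(G, u). ball_expanding n \<epsilon> (e L) G u} > 1 - \<eta> - \<theta>"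
proof -
  define P where "P = pair_pmf A (pmf_of_set {..<n})"
  define T where "T = {(G, u). (1 - \<epsilon>/2) * real n < real (card (typical_nodes n G u c b))}"
  define S where "S = {z :: graph \<times> nat. fst z \<in> {G. \<forall>i<L. sparse_graph n (e i) (C i) G}}"
  have "1 - \<eta> < measure_pmf.prob P T"
    unfolding P_def T_def using \<open>0 < n\<close> \<open>0 < \<epsilon>\<close> typical by (intro typical_nodes_likely) auto
  moreover have "1 - \<theta> \<le> measure_pmf.prob P S"
    unfolding P_def S_def measure_pair_pmf_fst using sparse .
  moreover have "measure_pmf.prob P (T \<inter> S) \<le> measure_pmf.prob P {(G, u). ball_expanding n \<epsilon> (e L) G u}"
  proof (rule measure_pmf.finite_measure_mono_AE)
    show "AE z in P. z \<in> T \<inter> S \<longrightarrow> z \<in> {(G, u). ball_expanding n \<epsilon> (e L) G u}"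
    proof (rule AE_pmfI, safe)
      fix G u assume "(G, u) \<in> set_pmf P" "(G, u) \<in> T" "(G, u) \<in> S"
      then show "ball_expanding n \<epsilon> (e L) G u"
        using simple chain e_pos budget assms(3-5) unfolding P_def T_def S_def
        by (intro ball_expanding_if_typical_sparse[where c = c and b = b and C = C]) auto
    qed
  qed simp
  ultimately show ?thesis
    using measure_pmf_Int_ge[of P T S] unfolding P_def by linarith
qed

lemma eventually_ball_expanding:
  assumes "random_network_model M" "uniformly_sparse M" "0 < \<epsilon>" "3 * \<epsilon> \<le> 2"
    and SI: "\<forall>\<^sub>F n in sequentially.
      measure_pmf.prob (pair_pmf (M n) (pair_pmf (pmf_of_set {..<n}) (pmf_of_set {..<n})))
        {(G, u, v). \<exists>k. gdist G u v = enat k \<and> \<bar>c n - real k\<bar> < b} > 1 - \<epsilon>/2 * (\<epsilon>/4)"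
  shows "\<exists>\<alpha>>0. \<forall>\<^sub>F n in sequentially. measure_pmf.prob (pair_pmf (M n) (pmf_of_set {..<n}))
           {(G, u). ball_expanding n \<epsilon> \<alpha> G u} > 1 - \<epsilon>"
proof -
  define L where "L = Suc (nat \<lceil>2 * b\<rceil>)"
  have "2 * b \<le> real L" "0 < L" unfolding L_def by linarith+
  obtain e C where e: "e 0 = \<epsilon> / 4 / real L" "\<And>i. 0 < e i" "\<And>i. 1 \<le> C i \<and> e (Suc i) = e i / C i"
    and US: "\<forall>\<^sub>F n in sequentially.
       measure_pmf.prob (M n) {G. \<forall>i<L. sparse_graph n (e i) (C i) G} \<ge> 1 - \<epsilon> / 4"
    using uniformly_sparse_threshold_chain[OF assms(2) _ \<open>0 < L\<close>, of "\<epsilon> / 4"] assms(3) by auto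
  have simple: "\<forall>G\<in>set_pmf (M n). simple_graph_on n G" for n
    using assms(1) unfolding random_network_model_def by blast
  have "\<forall>\<^sub>F n in sequentially. measure_pmf.prob (pair_pmf (M n) (pmf_of_set {..<n}))
      {(G, u). ball_expanding n \<epsilon> (e L) G u} > 1 - \<epsilon>/4 - \<epsilon>/4"
    using SI US eventually_gt_at_top[of 0]
  proof eventually_elim
    case (elim n)
    show ?case
      using elim simple e assms(3,4) \<open>2 * b \<le> real L\<close> \<open>0 < L\<close>
      by (intro ball_expanding_likely[where c = "c n" and b = b]) auto
  qed
  then show ?thesis
    using e(2)[of L] assms(3) by (auto elim!: eventually_mono)
qed

theorem lemma3:
  fixes M :: "nat \<Rightarrow> graph pmf"
  assumes "random_network_model M"
    and "strongly_idemetric M"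
    and "uniformly_sparse M"
  shows "PUMP M"
  unfolding PUMP_def ball_expanding_def[symmetric]
proof (intro allI impI)
  fix \<epsilon> :: real assume \<epsilon>: "0 < \<epsilon> \<and> \<epsilon> < 1/2"
  obtain c :: "nat \<Rightarrow> real" where "\<forall>\<delta>>0. \<exists>b. \<forall>\<^sub>F n in sequentially.
      measure_pmf.prob (pair_pmf (M n) (pair_pmf (pmf_of_set {..<n}) (pmf_of_set {..<n})))
        {(G, u, v). \<exists>k. gdist G u v = enat k \<and> \<bar>c n - real k\<bar> < b} > 1 - \<delta>"
    using assms(2) unfolding strongly_idemetric_def by blast
  moreover have "0 < \<epsilon>/2 * (\<epsilon>/4)" using \<epsilon> by simp
  ultimately obtain b where "\<forall>\<^sub>F n in sequentially.
      measure_pmf.prob (pair_pmf (M n) (pair_pmf (pmf_of_set {..<n}) (pmf_of_set {..<n})))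
        {(G, u, v). \<exists>k. gdist G u v = enat k \<and> \<bar>c n - real k\<bar> < b} > 1 - \<epsilon>/2 * (\<epsilon>/4)"
    by blast
  then show "\<exists>\<alpha>>0. \<forall>\<^sub>F n in sequentially. measure_pmf.prob (pair_pmf (M n) (pmf_of_set {..<n}))
      {(G, u). ball_expanding n \<epsilon> \<alpha> G u} > 1 - \<epsilon>"
    using assms(1,3) \<epsilon> by (intro eventually_ball_expanding) auto
qed

end
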